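(* Let $a\neq\pm1$ be a square-free integer and let $F$ be a finite Galois extension of $\mathbb{Q}$. Then there exists an integer $N$ such that whenever $a$ is an $m$th power in the compositum $F\cdot\mathbb{Q}^{\mathrm{ab}}$ (for a positive integer $m$), $m$ divides $N$.
   Context: $\mathbb{Q}^{\mathrm{ab}}$ denotes the maximal abelian extension of $\mathbb{Q}$ in a fixed algebraic closure containing $F$. *)

theory Defs
  imports Complex_Main "HOL-Computational_Algebra.Computational_Algebra"
begin

text \<open>We work inside the algebraically closed field of complex numbers, which contains
  a fixed algebraic closure of the rationals. All fields below are subfields of this.\<close>

definition subfield_C :: "complex set \<Rightarrow> bool" where
  "subfield_C K \<longleftrightarrow> 0 \<in> K \<and> 1 \<in> K \<and>
     (\<forall>x\<in>K. \<forall>y\<in>K. x + y \<in> K \<and> x - y \<in> K \<and> x * y \<in> K) \<and>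
     (\<forall>x\<in>K. x \<noteq> 0 \<longrightarrow> inverse x \<in> K)"

definition finite_over_Q :: "complex set \<Rightarrow> bool" where
  "finite_over_Q K \<longleftrightarrow> (\<exists>B. finite B \<and> B \<subseteq> K \<and>
     K = {\<Sum>b\<in>B. of_rat (c b) * b | c :: complex \<Rightarrow> rat. True})"

text \<open>Normality: the minimal polynomial over Q of every element splits in K
  (separability is automatic in characteristic 0).\<close>
definition normal_over_Q :: "complex set \<Rightarrow> bool" where
  "normal_over_Q K \<longleftrightarrow> (\<forall>x\<in>K. \<forall>p :: rat poly. irreducible p \<and>
     poly (map_poly of_rat p) x = 0 \<longrightarrow> (\<forall>y. poly (map_poly of_rat p) y = 0 \<longrightarrow> y \<in> K))"

definition finite_galois_over_Q :: "complex set \<Rightarrow> bool" where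
  "finite_galois_over_Q K \<longleftrightarrow> subfield_C K \<and> finite_over_Q K \<and> normal_over_Q K"

text \<open>Field automorphisms of K (they automatically fix Q).\<close>
definition field_auts :: "complex set \<Rightarrow> (complex \<Rightarrow> complex) set" where
  "field_auts K = {\<sigma>. bij_betw \<sigma> K K \<and> \<sigma> 1 = 1 \<and>
     (\<forall>x\<in>K. \<forall>y\<in>K. \<sigma> (x + y) = \<sigma> x + \<sigma> y \<and> \<sigma> (x * y) = \<sigma> x * \<sigma> y)}"

definition abelian_galois_over_Q :: "complex set \<Rightarrow> bool" where
  "abelian_galois_over_Q K \<longleftrightarrow> finite_galois_over_Q K \<and>
     (\<forall>\<sigma>\<in>field_auts K. \<forall>\<tau>\<in>field_auts K. \<forall>x\<in>K. \<sigma> (\<tau> x) = \<tau> (\<sigma> x))"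

definition Qab :: "complex set" where
  "Qab = \<Union> {K. abelian_galois_over_Q K}"

definition compositum :: "complex set \<Rightarrow> complex set \<Rightarrow> complex set" where
  "compositum A B = \<Inter> {L. subfield_C L \<and> A \<subseteq> L \<and> B \<subseteq> L}"

end

theory Submission
  imports Defs "HOL-Library.FuncSet" "HOL-Library.Set_Algebras"
begin

text \<open>
  Suppose x^m = a with x in the compositum of F and Q^ab. Then x lies in a finite Galois field L
  generated by F and finitely many abelian fields. An embedding of L that fixes F commutes with
  complex conjugation (on F because F is normal, on each abelian field because its automorphism
  group is commutative), so it maps the real number y = x * cnj x to a real number with the same
  m-th power a^2, and therefore fixes t = y^2. Consequently the conjugates of t are indexed by
  the embeddings of F. Their product is a rational number whose m-th power is a^(4c), where c is
  the number of conjugates; as a is squarefree and not a unit, m divides 4c, so m is at most four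
  times the number of embeddings of F.
\<close>

section \<open>Subfields of the complex numbers\<close>

lemma subfield_zero: "subfield_C K \<Longrightarrow> 0 \<in> K" by (simp add: subfield_C_def)

lemma subfield_one: "subfield_C K \<Longrightarrow> 1 \<in> K" by (simp add: subfield_C_def)

lemma subfield_add: "subfield_C K \<Longrightarrow> x \<in> K \<Longrightarrow> y \<in> K \<Longrightarrow> x + y \<in> K" by (simp add: subfield_C_def)

lemma subfield_diff: "subfield_C K \<Longrightarrow> x \<in> K \<Longrightarrow> y \<in> K \<Longrightarrow> x - y \<in> K" by (simp add: subfield_C_def)

lemma subfield_mult: "subfield_C K \<Longrightarrow> x \<in> K \<Longrightarrow> y \<in> K \<Longrightarrow> x * y \<in> K" by (simp add: subfield_C_def)

lemma subfield_inverse: "subfield_C K \<Longrightarrow> x \<in> K \<Longrightarrow> inverse x \<in> K"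
  by (cases "x = 0") (auto simp add: subfield_C_def)

lemma subfield_uminus: "subfield_C K \<Longrightarrow> x \<in> K \<Longrightarrow> - x \<in> K"
  using subfield_diff[of K 0 x] subfield_zero[of K] by simp

lemma subfield_divide: "subfield_C K \<Longrightarrow> x \<in> K \<Longrightarrow> y \<in> K \<Longrightarrow> x / y \<in> K"
  by (simp add: divide_inverse subfield_mult subfield_inverse)

lemma subfield_power: "subfield_C K \<Longrightarrow> x \<in> K \<Longrightarrow> x ^ n \<in> K"
  by (induction n) (auto simp: subfield_one subfield_mult)

lemma subfield_sum: "subfield_C K \<Longrightarrow> (\<And>i. i \<in> A \<Longrightarrow> f i \<in> K) \<Longrightarrow> sum f A \<in> K"
  by (induction A rule: infinite_finite_induct) (auto simp: subfield_zero subfield_add)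

lemma subfield_prod: "subfield_C K \<Longrightarrow> (\<And>i. i \<in> A \<Longrightarrow> f i \<in> K) \<Longrightarrow> prod f A \<in> K"
  by (induction A rule: infinite_finite_induct) (auto simp: subfield_one subfield_mult)

lemma subfield_of_nat: "subfield_C K \<Longrightarrow> of_nat n \<in> K"
  by (induction n) (auto simp: subfield_zero subfield_one subfield_add)

lemma subfield_of_int: "subfield_C K \<Longrightarrow> of_int n \<in> K"
  by (cases n rule: int_cases) (simp_all add: subfield_uminus subfield_of_nat del: of_nat_Suc)

lemma subfield_of_rat:
  assumes "subfield_C K" shows "(of_rat r :: complex) \<in> K"
proof -
  obtain a b where "r = of_int a / of_int b" by (metis Fract_of_int_quotient Rat_cases)
  then show ?thesis by (simp add: assms of_rat_divide subfield_divide subfield_of_int)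
qed

lemma subfield_Rats: "subfield_C K \<Longrightarrow> x \<in> \<rat> \<Longrightarrow> x \<in> K"
  by (auto elim!: Rats_cases simp: subfield_of_rat)

lemma subfield_C_Rats: "subfield_C \<rat>"
  unfolding subfield_C_def by auto

lemma subfield_C_Inter: "(\<And>L. L \<in> S \<Longrightarrow> subfield_C L) \<Longrightarrow> subfield_C (\<Inter> S)"
  unfolding subfield_C_def by auto

lemma subfield_C_Union_directed:
  assumes sub: "\<And>K. K \<in> \<K> \<Longrightarrow> subfield_C K" and ne: "\<K> \<noteq> {}"
    and directed: "\<And>K1 K2. K1 \<in> \<K> \<Longrightarrow> K2 \<in> \<K> \<Longrightarrow> \<exists>K\<in>\<K>. K1 \<union> K2 \<subseteq> K"
  shows "subfield_C (\<Union>\<K>)"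
  unfolding subfield_C_def
proof (intro conjI ballI impI)
  show "0 \<in> \<Union>\<K>" "1 \<in> \<Union>\<K>" using ne sub subfield_zero subfield_one by blast+
  fix x y assume "x \<in> \<Union>\<K>" "y \<in> \<Union>\<K>"
  then obtain K where K: "K \<in> \<K>" "x \<in> K" "y \<in> K" using directed by blast
  then show "x + y \<in> \<Union>\<K>" "x - y \<in> \<Union>\<K>" "x * y \<in> \<Union>\<K>"
    using sub[OF K(1)] subfield_add subfield_diff subfield_mult by blast+
next
  fix x assume "x \<in> \<Union>\<K>"
  then show "inverse x \<in> \<Union>\<K>" using sub subfield_inverse by blast
qed

section \<open>Embeddings of subfields\<close>

definition hom_on :: "complex set \<Rightarrow> (complex \<Rightarrow> complex) \<Rightarrow> bool" where
  "hom_on M t \<longleftrightarrow> t 1 = 1 \<and> (\<forall>x\<in>M. \<forall>y\<in>M. t (x + y) = t x + t y \<and> t (x * y) = t x * t y)"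

lemma hom_on_add: "hom_on M t \<Longrightarrow> x \<in> M \<Longrightarrow> y \<in> M \<Longrightarrow> t (x + y) = t x + t y"
  by (simp add: hom_on_def)

lemma hom_on_mult: "hom_on M t \<Longrightarrow> x \<in> M \<Longrightarrow> y \<in> M \<Longrightarrow> t (x * y) = t x * t y"
  by (simp add: hom_on_def)

lemma hom_on_one: "hom_on M t \<Longrightarrow> t 1 = 1"
  by (simp add: hom_on_def)

lemma hom_on_zero: "hom_on M t \<Longrightarrow> subfield_C M \<Longrightarrow> t 0 = 0"
  using hom_on_add[of M t 0 0] subfield_zero[of M] by simp

lemma hom_on_uminus: "hom_on M t \<Longrightarrow> subfield_C M \<Longrightarrow> x \<in> M \<Longrightarrow> t (- x) = - t x"
  using hom_on_add[of M t x "-x"] hom_on_zero[of M t] subfield_uminus[of M x]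
  by (simp add: add_eq_0_iff)

lemma hom_on_diff: "hom_on M t \<Longrightarrow> subfield_C M \<Longrightarrow> x \<in> M \<Longrightarrow> y \<in> M \<Longrightarrow> t (x - y) = t x - t y"
  using hom_on_add[of M t x "-y"] hom_on_uminus[of M t y] subfield_uminus[of M y] by simp

lemma hom_on_inverse:
  assumes t: "hom_on M t" and M: "subfield_C M" and x: "x \<in> M"
  shows "t (inverse x) = inverse (t x)"
proof (cases "x = 0")
  case True
  then show ?thesis using hom_on_zero[OF t M] by simp
next
  case False
  have "t x * t (inverse x) = 1"
    using hom_on_mult[OF t x subfield_inverse[OF M x]] False hom_on_one[OF t] by simp
  then show ?thesis by (metis inverse_unique)
qed

lemma hom_on_nonzero: "hom_on M t \<Longrightarrow> subfield_C M \<Longrightarrow> x \<in> M \<Longrightarrow> x \<noteq> 0 \<Longrightarrow> t x \<noteq> 0"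
  using hom_on_mult[of M t x "inverse x"] subfield_inverse[of M x] hom_on_one[of M t] by fastforce

lemma hom_on_inj: "hom_on M t \<Longrightarrow> subfield_C M \<Longrightarrow> inj_on t M"
  unfolding inj_on_def
  using hom_on_diff hom_on_nonzero subfield_diff by (metis eq_iff_diff_eq_0)

lemma hom_on_divide: "hom_on M t \<Longrightarrow> subfield_C M \<Longrightarrow> x \<in> M \<Longrightarrow> y \<in> M \<Longrightarrow> t (x / y) = t x / t y"
  by (simp add: divide_inverse hom_on_mult hom_on_inverse subfield_inverse)

lemma hom_on_power: "hom_on M t \<Longrightarrow> subfield_C M \<Longrightarrow> x \<in> M \<Longrightarrow> t (x ^ n) = t x ^ n"
  by (induction n) (auto simp: hom_on_one hom_on_mult subfield_power)

lemma hom_on_sum: "hom_on M t \<Longrightarrow> subfield_C M \<Longrightarrow> (\<And>i. i \<in> A \<Longrightarrow> f i \<in> M) \<Longrightarrow>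
  t (sum f A) = (\<Sum>i\<in>A. t (f i))"
  by (induction A rule: infinite_finite_induct) (auto simp: hom_on_zero hom_on_add subfield_sum)

lemma hom_on_prod: "hom_on M t \<Longrightarrow> subfield_C M \<Longrightarrow> (\<And>i. i \<in> A \<Longrightarrow> f i \<in> M) \<Longrightarrow>
  t (prod f A) = (\<Prod>i\<in>A. t (f i))"
  by (induction A rule: infinite_finite_induct) (auto simp: hom_on_one hom_on_mult subfield_prod)

lemma hom_on_of_nat: "hom_on M t \<Longrightarrow> subfield_C M \<Longrightarrow> t (of_nat n) = of_nat n"
  by (induction n) (auto simp: hom_on_zero hom_on_one hom_on_add subfield_of_nat subfield_one)

lemma hom_on_of_int: "hom_on M t \<Longrightarrow> subfield_C M \<Longrightarrow> t (of_int n) = of_int n"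
  by (cases n rule: int_cases)
    (simp_all add: hom_on_uminus hom_on_of_nat subfield_of_nat del: of_nat_Suc)

lemma hom_on_of_rat:
  assumes t: "hom_on M t" and M: "subfield_C M" shows "t (of_rat r) = of_rat r"
proof -
  obtain a b where "r = of_int a / of_int b" by (metis Fract_of_int_quotient Rat_cases)
  then show ?thesis
    by (simp add: of_rat_divide hom_on_divide[OF t M] subfield_of_int[OF M] hom_on_of_int[OF t M])
qed

lemma hom_on_Rats: "hom_on M t \<Longrightarrow> subfield_C M \<Longrightarrow> x \<in> \<rat> \<Longrightarrow> t x = x"
  by (auto elim!: Rats_cases simp: hom_on_of_rat)

lemma hom_on_subset: "hom_on L t \<Longrightarrow> M \<subseteq> L \<Longrightarrow> hom_on M t"
  unfolding hom_on_def by blast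

lemma hom_on_id: "hom_on M id" by (simp add: hom_on_def)

lemma hom_on_cnj: "hom_on M cnj" by (simp add: hom_on_def)

lemma hom_on_inv_into:
  assumes L: "subfield_C L" and s: "hom_on L s" and b: "bij_betw s L L"
  shows "hom_on L (inv_into L s)"
proof -
  have inj: "inj_on s L" and im: "s ` L = L" using b by (auto simp: bij_betw_def)
  have e: "inv_into L s (s x) = x" if "x \<in> L" for x using inj that by simp
  show ?thesis unfolding hom_on_def
  proof (intro conjI ballI)
    show "inv_into L s 1 = 1" using e[OF subfield_one[OF L]] hom_on_one[OF s] by simp
  next
    fix x y assume x: "x \<in> L" and y: "y \<in> L"
    obtain x' where x': "x' \<in> L" "x = s x'" using x im by auto
    obtain y' where y': "y' \<in> L" "y = s y'" using y im by auto
    have "x + y = s (x' + y')" using x' y' hom_on_add[OF s] by simp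
    then show "inv_into L s (x + y) = inv_into L s x + inv_into L s y"
      using e x' y' subfield_add[OF L] by simp
    have "x * y = s (x' * y')" using x' y' hom_on_mult[OF s] by simp
    then show "inv_into L s (x * y) = inv_into L s x * inv_into L s y"
      using e x' y' subfield_mult[OF L] by simp
  qed
qed

lemma subfield_C_preimage:
  assumes L: "subfield_C L" and s: "hom_on L s"
  shows "subfield_C {w \<in> L. s w \<in> L}"
  unfolding subfield_C_def
proof (intro conjI ballI impI)
  show "0 \<in> {w \<in> L. s w \<in> L}" using hom_on_zero[OF s L] subfield_zero[OF L] by simp
  show "1 \<in> {w \<in> L. s w \<in> L}" using hom_on_one[OF s] subfield_one[OF L] by simp
  fix x y assume x: "x \<in> {w \<in> L. s w \<in> L}" and y: "y \<in> {w \<in> L. s w \<in> L}"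
  then show "x + y \<in> {w \<in> L. s w \<in> L}" "x - y \<in> {w \<in> L. s w \<in> L}" "x * y \<in> {w \<in> L. s w \<in> L}"
    using hom_on_add[OF s] hom_on_diff[OF s L] hom_on_mult[OF s] subfield_add[OF L]
      subfield_diff[OF L] subfield_mult[OF L] by auto
next
  fix x assume x: "x \<in> {w \<in> L. s w \<in> L}"
  then show "inverse x \<in> {w \<in> L. s w \<in> L}"
    using hom_on_inverse[OF s L] subfield_inverse[OF L] by auto
qed

lemma subfield_C_equalizer:
  assumes L: "subfield_C L" and f: "hom_on L f" and g: "hom_on L g"
  shows "subfield_C {w \<in> L. f w = g w}"
  unfolding subfield_C_def
proof (intro conjI ballI impI)
  show "0 \<in> {w \<in> L. f w = g w}" using hom_on_zero[OF f L] hom_on_zero[OF g L] subfield_zero[OF L]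
    by simp
  show "1 \<in> {w \<in> L. f w = g w}" using hom_on_one[OF f] hom_on_one[OF g] subfield_one[OF L] by simp
  fix x y assume x: "x \<in> {w \<in> L. f w = g w}" and y: "y \<in> {w \<in> L. f w = g w}"
  then show "x + y \<in> {w \<in> L. f w = g w}" "x - y \<in> {w \<in> L. f w = g w}" "x * y \<in> {w \<in> L. f w = g w}"
    using hom_on_add[OF f] hom_on_diff[OF f L] hom_on_mult[OF f]
      hom_on_add[OF g] hom_on_diff[OF g L] hom_on_mult[OF g]
      subfield_add[OF L] subfield_diff[OF L] subfield_mult[OF L] by auto
next
  fix x assume x: "x \<in> {w \<in> L. f w = g w}"
  then show "inverse x \<in> {w \<in> L. f w = g w}"
    using hom_on_inverse[OF f L] hom_on_inverse[OF g L] subfield_inverse[OF L] by auto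
qed

section \<open>Polynomials over a subfield\<close>

definition poly_over :: "complex set \<Rightarrow> complex poly \<Rightarrow> bool" where
  "poly_over M p \<longleftrightarrow> (\<forall>i. coeff p i \<in> M)"

lemma poly_over_coeff: "poly_over M p \<Longrightarrow> coeff p i \<in> M" by (simp add: poly_over_def)

lemma poly_over_0: "subfield_C M \<Longrightarrow> poly_over M 0" by (simp add: poly_over_def subfield_zero)

lemma poly_over_const: "subfield_C M \<Longrightarrow> c \<in> M \<Longrightarrow> poly_over M [:c:]"
  by (auto simp: poly_over_def coeff_pCons subfield_zero split: nat.splits)

lemma poly_over_pCons: "subfield_C M \<Longrightarrow> poly_over M (pCons c p) \<longleftrightarrow> c \<in> M \<and> poly_over M p"
  unfolding poly_over_def by (metis coeff_pCons_0 coeff_pCons_Suc not0_implies_Suc)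

lemma poly_over_add: "subfield_C M \<Longrightarrow> poly_over M p \<Longrightarrow> poly_over M q \<Longrightarrow> poly_over M (p + q)"
  by (simp add: poly_over_def subfield_add)

lemma poly_over_diff: "subfield_C M \<Longrightarrow> poly_over M p \<Longrightarrow> poly_over M q \<Longrightarrow> poly_over M (p - q)"
  by (simp add: poly_over_def subfield_diff)

lemma poly_over_smult: "subfield_C M \<Longrightarrow> c \<in> M \<Longrightarrow> poly_over M p \<Longrightarrow> poly_over M (smult c p)"
  by (simp add: poly_over_def subfield_mult)

lemma poly_over_monom: "subfield_C M \<Longrightarrow> c \<in> M \<Longrightarrow> poly_over M (monom c n)"
  by (simp add: poly_over_def subfield_zero)

lemma poly_over_mult: "subfield_C M \<Longrightarrow> poly_over M p \<Longrightarrow> poly_over M q \<Longrightarrow> poly_over M (p * q)"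
  unfolding poly_over_def coeff_mult by (auto intro!: subfield_sum subfield_mult)

lemma poly_over_pX: "subfield_C M \<Longrightarrow> poly_over M [:0, 1:]"
  by (simp add: poly_over_pCons subfield_zero subfield_one poly_over_0)

lemma poly_over_mono: "poly_over M p \<Longrightarrow> M \<subseteq> N \<Longrightarrow> poly_over N p"
  by (auto simp: poly_over_def)

lemma poly_over_in_subfield: "subfield_C M \<Longrightarrow> poly_over M p \<Longrightarrow> x \<in> M \<Longrightarrow> poly p x \<in> M"
  by (induction p) (auto simp: poly_over_pCons subfield_add subfield_mult subfield_zero)

lemma poly_Rats_closed:
  assumes "\<rat> \<subseteq> R" "\<And>x y. x \<in> R \<Longrightarrow> y \<in> R \<Longrightarrow> x + y \<in> R"
    "\<And>x y. x \<in> R \<Longrightarrow> y \<in> R \<Longrightarrow> x * y \<in> R" "w \<in> R" "poly_over \<rat> q"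
  shows "poly q w \<in> R"
  using assms(5)
proof (induction q)
  case 0
  then show ?case using assms(1) by auto
next
  case (pCons a q)
  then have "a \<in> \<rat>" "poly_over \<rat> q" by (auto simp: poly_over_pCons subfield_C_Rats)
  with pCons show ?case using assms by auto
qed

lemma coeff_map_poly_hom_on: "hom_on M t \<Longrightarrow> subfield_C M \<Longrightarrow> coeff (map_poly t p) i = t (coeff p i)"
  by (simp add: coeff_map_poly hom_on_zero)

lemma map_poly_hom_on_add: "hom_on M t \<Longrightarrow> subfield_C M \<Longrightarrow> poly_over M p \<Longrightarrow> poly_over M q \<Longrightarrow>
  map_poly t (p + q) = map_poly t p + map_poly t q"
  by (rule poly_eqI) (simp add: coeff_map_poly_hom_on hom_on_add poly_over_coeff)

lemma map_poly_hom_on_diff: "hom_on M t \<Longrightarrow> subfield_C M \<Longrightarrow> poly_over M p \<Longrightarrow> poly_over M q \<Longrightarrow>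
  map_poly t (p - q) = map_poly t p - map_poly t q"
  by (rule poly_eqI) (simp add: coeff_map_poly_hom_on hom_on_diff poly_over_coeff)

lemma map_poly_hom_on_mult:
  assumes t: "hom_on M t" and M: "subfield_C M" and p: "poly_over M p" and q: "poly_over M q"
  shows "map_poly t (p * q) = map_poly t p * map_poly t q"
proof (rule poly_eqI)
  fix n
  have "t (\<Sum>i\<le>n. coeff p i * coeff q (n - i)) = (\<Sum>i\<le>n. t (coeff p i) * t (coeff q (n - i)))"
    using p q
    by (simp add: hom_on_sum[OF t M] hom_on_mult[OF t] poly_over_coeff subfield_mult[OF M])
  then show "coeff (map_poly t (p * q)) n = coeff (map_poly t p * map_poly t q) n"
    by (simp add: coeff_map_poly_hom_on[OF t M] coeff_mult)
qed

lemma map_poly_hom_on_const: "hom_on M t \<Longrightarrow> subfield_C M \<Longrightarrow> map_poly t [:c:] = [:t c:]"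
  by (rule poly_eqI) (simp add: coeff_map_poly_hom_on coeff_pCons hom_on_zero split: nat.splits)

lemma map_poly_hom_on_pX: "hom_on M t \<Longrightarrow> subfield_C M \<Longrightarrow> map_poly t [:0, 1:] = [:0, 1:]"
  by (rule poly_eqI)
    (simp add: coeff_map_poly_hom_on coeff_pCons hom_on_zero hom_on_one split: nat.splits)

lemma poly_hom_on_Rats:
  assumes "hom_on L t" "subfield_C L" "poly_over \<rat> q" "z \<in> L"
  shows "poly q (t z) = t (poly q z)"
  using assms(3)
proof (induction q)
  case 0
  then show ?case using assms by (simp add: hom_on_zero)
next
  case (pCons a q)
  then have a: "a \<in> \<rat>" "poly_over \<rat> q" by (auto simp: poly_over_pCons subfield_C_Rats)
  have aL: "a \<in> L" using a subfield_Rats assms by blast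
  have qL: "poly q z \<in> L"
    using poly_over_in_subfield[OF assms(2) poly_over_mono[OF a(2)] assms(4)]
      subfield_Rats[OF assms(2)] by blast
  show ?case using pCons a aL qL assms
    by (simp add: hom_on_add hom_on_mult subfield_mult hom_on_Rats)
qed

lemma hom_on_root:
  assumes "subfield_C K" "hom_on K s" "z \<in> K" "poly_over \<rat> p" "poly p z = 0"
  shows "poly p (s z) = 0"
  using poly_hom_on_Rats[OF assms(2,1,4,3)] assms(5) hom_on_zero[OF assms(2,1)] by simp

lemma poly_over_cancel_lead_coeff:
  assumes M: "subfield_C M" and g: "poly_over M g" "g \<noteq> 0"
    and p: "poly_over M p" "degree g \<le> degree p"
  shows "\<exists>q. poly_over M q \<and> (p - q * g = 0 \<or> degree (p - q * g) < degree p)"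
proof -
  define c where "c = lead_coeff p / lead_coeff g"
  define k where "k = degree p - degree g"
  have c: "c \<in> M" unfolding c_def using p g by (intro subfield_divide M poly_over_coeff)
  have deg_le: "degree (monom c k * g) \<le> degree p"
    using degree_mult_le[of "monom c k" g] degree_monom_le[of c k] p(2) unfolding k_def by linarith
  have "coeff (p - monom c k * g) i = 0" if "i \<ge> degree p" for i
  proof (cases "i = degree p")
    case True
    then show ?thesis using p(2) g(2) by (simp add: coeff_monom_mult k_def c_def)
  next
    case False
    then show ?thesis using that deg_le by (simp add: coeff_eq_0)
  qed
  then have "p - monom c k * g = 0 \<or> degree (p - monom c k * g) < degree p"
    by (metis leading_coeff_0_iff not_le)
  then show ?thesis using poly_over_monom[OF M c] by blast
qed

lemma poly_over_div_mod:
  assumes M: "subfield_C M" and g: "poly_over M g" "g \<noteq> 0"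
  shows "poly_over M p \<Longrightarrow>
    \<exists>q r. poly_over M q \<and> poly_over M r \<and> p = g * q + r \<and> (r = 0 \<or> degree r < degree g)"
proof (induction "degree p" arbitrary: p rule: less_induct)
  case less
  show ?case
  proof (cases "p = 0 \<or> degree p < degree g")
    case True
    then show ?thesis using less.prems M by (intro exI[of _ 0] exI[of _ p]) (auto simp: poly_over_0)
  next
    case False
    then obtain q where q: "poly_over M q" and red: "p - q * g = 0 \<or> degree (p - q * g) < degree p"
      using poly_over_cancel_lead_coeff[OF M g less.prems] by auto
    have rest: "poly_over M (p - q * g)" by (intro poly_over_diff poly_over_mult M less.prems g q)
    show ?thesis
    proof (cases "p - q * g = 0")
      case True
      then show ?thesis using q M by (intro exI[of _ q] exI[of _ 0]) (auto simp: poly_over_0)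
    next
      case False
      with red have "degree (p - q * g) < degree p" by blast
      from less.hyps[OF this rest] obtain q' r where qr: "poly_over M q'" "poly_over M r"
        "p - q * g = g * q' + r" "r = 0 \<or> degree r < degree g" by blast
      have "p = g * (q + q') + r" using qr(3) by (simp add: algebra_simps eq_diff_eq)
      moreover have "poly_over M (q + q')" using poly_over_add[OF M q qr(1)] .
      ultimately show ?thesis using qr(2,4) by blast
    qed
  qed
qed

section \<open>Minimal polynomials\<close>

lemma algebraic_iff_poly_over:
  "algebraic z \<longleftrightarrow> (\<exists>p. p \<noteq> 0 \<and> poly_over \<rat> p \<and> poly p (z :: complex) = 0)"
  by (auto simp: algebraic_altdef poly_over_def)

definition is_min_poly :: "complex set \<Rightarrow> complex \<Rightarrow> complex poly \<Rightarrow> bool" where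
  "is_min_poly M a g \<longleftrightarrow> poly_over M g \<and> lead_coeff g = 1 \<and> poly g a = 0 \<and>
     (\<forall>p. poly_over M p \<and> p \<noteq> 0 \<and> poly p a = 0 \<longrightarrow> degree g \<le> degree p)"

lemma min_poly_exists:
  assumes M: "subfield_C M" and a: "algebraic a"
  shows "\<exists>g. is_min_poly M a g"
proof -
  from a obtain p0 where p0: "p0 \<noteq> 0" "poly_over \<rat> p0" "poly p0 a = 0"
    by (auto simp: algebraic_iff_poly_over)
  have p0M: "poly_over M p0" using p0(2) subfield_Rats[OF M] by (auto simp: poly_over_def)
  define P where "P = (\<lambda>n. \<exists>p. poly_over M p \<and> p \<noteq> 0 \<and> poly p a = 0 \<and> degree p = n)"
  have "P (degree p0)" using p0 p0M by (auto simp: P_def)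
  then have "P (LEAST n. P n)" by (rule LeastI)
  then obtain p where p: "poly_over M p" "p \<noteq> 0" "poly p a = 0" "degree p = (LEAST n. P n)"
    by (auto simp: P_def)
  have min: "degree p \<le> degree q" if "poly_over M q" "q \<noteq> 0" "poly q a = 0" for q
    using p(4) Least_le[of P "degree q"] that by (auto simp: P_def)
  define g where "g = smult (inverse (lead_coeff p)) p"
  have "poly_over M g" unfolding g_def using p M
    by (intro poly_over_smult subfield_inverse poly_over_coeff) auto
  moreover have "lead_coeff g = 1" using p(2) by (simp add: g_def)
  moreover have "poly g a = 0" using p by (simp add: g_def)
  moreover have "degree g = degree p" using p(2) by (simp add: g_def)
  ultimately show ?thesis using min unfolding is_min_poly_def by (intro exI[of _ g]) auto
qed

lemma is_min_poly_nonzero: "is_min_poly M a g \<Longrightarrow> g \<noteq> 0"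
  by (auto simp: is_min_poly_def)

lemma is_min_poly_degree: "is_min_poly M a g \<Longrightarrow> degree g \<ge> 1"
proof (rule ccontr)
  assume h: "is_min_poly M a g" "\<not> degree g \<ge> 1"
  then have "degree g = 0" by simp
  then have "g = [:lead_coeff g:]" by (metis degree_0_id)
  then have "g = 1" using h(1) by (simp add: is_min_poly_def one_pCons)
  then show False using h(1) by (simp add: is_min_poly_def)
qed

lemma is_min_poly_dvd:
  assumes M: "subfield_C M" and g: "is_min_poly M a g" and p: "poly_over M p" "poly p a = 0"
  shows "\<exists>h. poly_over M h \<and> p = g * h"
proof -
  have gM: "poly_over M g" "g \<noteq> 0" using g by (auto simp: is_min_poly_def)
  obtain q r where qr: "poly_over M q" "poly_over M r" "p = g * q + r" "r = 0 \<or> degree r < degree g"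
    using poly_over_div_mod[OF M gM p(1)] by blast
  have "poly r a = 0" using qr(3) p(2) g by (simp add: is_min_poly_def)
  then have "r = 0" using qr(2,4) g by (auto simp: is_min_poly_def)
  then show ?thesis using qr by auto
qed

lemma algebraic_inverse_poly:
  assumes a: "algebraic w"
  shows "\<exists>q. poly_over \<rat> q \<and> inverse w = poly q w"
proof (cases "w = 0")
  case True
  then show ?thesis by (intro exI[of _ 0]) (simp add: poly_over_0 subfield_C_Rats)
next
  case False
  obtain g where g: "is_min_poly \<rat> w g" using min_poly_exists[OF subfield_C_Rats a] by blast
  obtain c p1 where cp: "g = pCons c p1" by (cases g) auto
  have gQ: "poly_over \<rat> g" using g by (simp add: is_min_poly_def)
  then have cQ: "c \<in> \<rat>" and p1Q: "poly_over \<rat> p1" using cp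
    by (auto simp: poly_over_pCons subfield_C_Rats)
  have eq: "c + w * poly p1 w = 0" using g cp by (simp add: is_min_poly_def)
  have "c \<noteq> 0"
  proof
    assume c0: "c = 0"
    then have "poly p1 w = 0" using eq False by simp
    moreover have "p1 \<noteq> 0" using cp c0 g by (auto simp: is_min_poly_def)
    moreover have "degree p1 < degree g" using cp c0 \<open>p1 \<noteq> 0\<close> by simp
    ultimately show False using g p1Q by (auto simp: is_min_poly_def)
  qed
  have e2: "w * poly p1 w = - c" using eq by (simp add: add_eq_0_iff)
  have "w * (- inverse c * poly p1 w) = - inverse c * (w * poly p1 w)" by (simp add: algebra_simps)
  also have "\<dots> = 1" using e2 \<open>c \<noteq> 0\<close> by simp
  finally have "w * (- inverse c * poly p1 w) = 1" .
  then have "inverse w = poly (smult (- inverse c) p1) w"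
    by (simp add: inverse_unique)
  moreover have "poly_over \<rat> (smult (- inverse c) p1)"
    using cQ p1Q \<open>c \<noteq> 0\<close> by (intro poly_over_smult subfield_C_Rats) auto
  ultimately show ?thesis by blast
qed

lemma subfield_C_algebraicI:
  assumes "\<rat> \<subseteq> R" "\<And>x y. x \<in> R \<Longrightarrow> y \<in> R \<Longrightarrow> x + y \<in> R"
    "\<And>x y. x \<in> R \<Longrightarrow> y \<in> R \<Longrightarrow> x * y \<in> R" "\<And>x. x \<in> R \<Longrightarrow> - x \<in> R"
    "\<And>x. x \<in> R \<Longrightarrow> algebraic x"
  shows "subfield_C R"
  unfolding subfield_C_def
proof (intro conjI ballI impI)
  show "0 \<in> R" "1 \<in> R" using assms(1) by auto
  fix x y assume xy: "x \<in> R" "y \<in> R"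
  show "x + y \<in> R" "x * y \<in> R" using xy assms by auto
  show "x - y \<in> R" using assms(2)[OF xy(1) assms(4)[OF xy(2)]] by simp
next
  fix x assume x: "x \<in> R"
  obtain q where "poly_over \<rat> q" "inverse x = poly q x"
    using algebraic_inverse_poly assms(5)[OF x] by blast
  then show "inverse x \<in> R" using poly_Rats_closed[OF assms(1-3) x] by simp
qed

abbreviation of_rat_poly :: "rat poly \<Rightarrow> complex poly" where "of_rat_poly p \<equiv> map_poly of_rat p"

lemma coeff_of_rat_poly: "coeff (of_rat_poly p) i = of_rat (coeff p i)"
  by (simp add: coeff_map_poly)

lemma of_rat_poly_mult: "of_rat_poly (a * b) = of_rat_poly a * of_rat_poly b"
  by (rule poly_eqI) (simp add: coeff_of_rat_poly coeff_mult of_rat_sum of_rat_mult)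

lemma of_rat_poly_inj: "of_rat_poly a = of_rat_poly b \<Longrightarrow> a = b"
  by (rule poly_eqI) (metis coeff_of_rat_poly of_rat_eq_iff)

lemma degree_of_rat_poly: "degree (of_rat_poly p) = degree p"
  by (rule degree_map_poly) simp

lemma of_rat_poly_eq_0_iff: "of_rat_poly p = 0 \<longleftrightarrow> p = 0"
  using of_rat_poly_inj[of p 0] by auto

lemma poly_over_of_rat_poly: "poly_over \<rat> (of_rat_poly p)"
  by (simp add: poly_over_def coeff_of_rat_poly)

lemma poly_over_Rats_imp_of_rat_poly: "poly_over \<rat> g \<Longrightarrow> \<exists>g0. g = of_rat_poly g0"
  using ratpolyE[of g] by (metis poly_over_coeff)

lemma is_min_poly_irreducible:
  assumes g: "is_min_poly \<rat> z g" and g0: "g = of_rat_poly g0"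
  shows "irreducible g0"
proof (rule irreducibleI)
  show "g0 \<noteq> 0" using is_min_poly_nonzero[OF g] g0 by auto
  show "\<not> g0 dvd 1"
    using is_min_poly_degree[OF g] g0 degree_of_rat_poly[of g0] is_unit_iff_degree[OF \<open>g0 \<noteq> 0\<close>]
      by simp
  fix a b assume ab: "g0 = a * b"
  have a0: "a \<noteq> 0" and b0: "b \<noteq> 0" using ab \<open>g0 \<noteq> 0\<close> by auto
  have "poly (of_rat_poly a) z * poly (of_rat_poly b) z = 0" using g g0 ab
    by (simp add: is_min_poly_def of_rat_poly_mult)
  then have disj: "poly (of_rat_poly a) z = 0 \<or> poly (of_rat_poly b) z = 0" by simp
  have dg: "degree g0 = degree a + degree b" using ab a0 b0 by (simp add: degree_mult_eq)
  from disj have "degree a = 0 \<or> degree b = 0"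
  proof
    assume "poly (of_rat_poly a) z = 0"
    then have "degree g \<le> degree (of_rat_poly a)"
      using g a0 poly_over_of_rat_poly[of a] of_rat_poly_eq_0_iff[of a]
        by (auto simp: is_min_poly_def)
    then show ?thesis using dg g0 degree_of_rat_poly by simp
  next
    assume "poly (of_rat_poly b) z = 0"
    then have "degree g \<le> degree (of_rat_poly b)"
      using g b0 poly_over_of_rat_poly[of b] of_rat_poly_eq_0_iff[of b]
        by (auto simp: is_min_poly_def)
    then show ?thesis using dg g0 degree_of_rat_poly by simp
  qed
  then show "a dvd 1 \<or> b dvd 1" using a0 b0 is_unit_iff_degree by blast
qed

lemma is_min_poly_root_if_irreducible_root:
  assumes p: "irreducible p" "poly (of_rat_poly p) z = 0" and g: "is_min_poly \<rat> z g"
    and y: "poly (of_rat_poly p) y = 0"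
  shows "poly g y = 0"
proof -
  obtain h where h: "poly_over \<rat> h" "of_rat_poly p = g * h"
    using is_min_poly_dvd[OF subfield_C_Rats g poly_over_of_rat_poly p(2)] by blast
  obtain g0 where g0: "g = of_rat_poly g0" using poly_over_Rats_imp_of_rat_poly g
    by (auto simp: is_min_poly_def)
  obtain h0 where h0: "h = of_rat_poly h0" using poly_over_Rats_imp_of_rat_poly h(1) by blast
  have "of_rat_poly p = of_rat_poly (g0 * h0)" using h g0 h0 by (simp add: of_rat_poly_mult)
  then have pe: "p = g0 * h0" by (rule of_rat_poly_inj)
  have g0nu: "\<not> g0 dvd 1"
    using is_min_poly_irreducible[OF g g0] by (simp add: irreducible_def)
  then have "h0 dvd 1" using irreducibleD[OF p(1) pe] by blast
  moreover have "h0 \<noteq> 0" using pe p(1) by auto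
  ultimately have "degree h0 = 0" using is_unit_iff_degree by blast
  then have "h0 = [:coeff h0 0:]" by (metis degree_0_id)
  moreover have "poly (of_rat_poly [:coeff h0 0:]) y = of_rat (coeff h0 0)"
    by (simp add: map_poly_pCons)
  ultimately have "poly h y = of_rat (coeff h0 0)" using h0 by metis
  moreover have "coeff h0 0 \<noteq> 0" using \<open>h0 \<noteq> 0\<close> \<open>h0 = [:coeff h0 0:]\<close> by (metis pCons_0_0)
  ultimately have "poly h y \<noteq> 0" by simp
  moreover have "poly g y * poly h y = 0" using y h(2) by (metis poly_mult)
  ultimately show ?thesis by simp
qed

lemma algebraic_irreducible_root: "algebraic z \<Longrightarrow> \<exists>p. irreducible p \<and> poly (of_rat_poly p) z = 0"
proof -
  assume "algebraic z"
  then obtain g where g: "is_min_poly \<rat> z g" using min_poly_exists[OF subfield_C_Rats] by blast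
  then obtain g0 where g0: "g = of_rat_poly g0" using poly_over_Rats_imp_of_rat_poly
    by (auto simp: is_min_poly_def)
  have "poly (of_rat_poly g0) z = 0" using g g0 by (simp add: is_min_poly_def)
  then show ?thesis using is_min_poly_irreducible[OF g g0] by blast
qed

section \<open>Subfields of finite dimension over the rationals\<close>

definition rat_scale :: "rat \<Rightarrow> complex \<Rightarrow> complex" where "rat_scale r z = of_rat r * z"

interpretation Q: vector_space rat_scale
  by unfold_locales (simp_all add: rat_scale_def algebra_simps of_rat_add of_rat_mult)

lemma finite_over_Q_span: "finite_over_Q K \<longleftrightarrow> (\<exists>B. finite B \<and> B \<subseteq> K \<and> K = Q.span B)"
proof -
  have eq: "Q.span B = {\<Sum>b\<in>B. of_rat (c b) * b | c :: complex \<Rightarrow> rat. True}" if "finite B" for B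
    using Q.span_finite[OF that] by (auto simp: rat_scale_def)
  show ?thesis unfolding finite_over_Q_def using eq by blast
qed

lemma subfield_C_subspace: "subfield_C K \<Longrightarrow> Q.subspace K"
  unfolding Q.subspace_def
    by (auto simp: subfield_zero subfield_add subfield_mult subfield_of_rat rat_scale_def)

lemma algebraic_if_dependent_powers:
  assumes I: "finite I" "inj_on (\<lambda>i. z ^ i) I" and dep: "Q.dependent ((\<lambda>i. z ^ i) ` I)"
  shows "algebraic z"
proof -
  obtain T u where T: "finite T" "T \<subseteq> (\<lambda>i. z ^ i) ` I" "(\<Sum>v\<in>T. rat_scale (u v) v) = 0"
    and nontrivial: "\<exists>v\<in>T. u v \<noteq> 0"
    using dep unfolding Q.dependent_explicit by blast
  define J where "J = {i \<in> I. z ^ i \<in> T}"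
  have TJ: "T = (\<lambda>i. z ^ i) ` J" using T(2) by (auto simp: J_def)
  have J: "finite J" "inj_on (\<lambda>i. z ^ i) J" using I by (auto simp: J_def intro: inj_on_subset)
  define p :: "complex poly" where "p = (\<Sum>i\<in>J. monom (of_rat (u (z ^ i))) i)"
  have "poly p z = (\<Sum>v\<in>T. rat_scale (u v) v)"
    unfolding TJ by (simp add: p_def poly_sum poly_monom sum.reindex[OF J(2)] rat_scale_def)
  then have "poly p z = 0" using T(3) by simp
  moreover have coeff_p: "coeff p k = (if k \<in> J then of_rat (u (z ^ k)) else 0)" for k
    unfolding p_def coeff_sum using J(1) by (simp add: if_distrib)
  then have "p \<noteq> 0" using nontrivial TJ
    by (metis (no_types, lifting) imageE of_rat_eq_0_iff coeff_0)
  moreover have "poly_over \<rat> p" unfolding poly_over_def coeff_p by auto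
  ultimately show ?thesis by (auto simp: algebraic_iff_poly_over)
qed

lemma algebraic_if_powers_in_span:
  assumes B: "finite B" and pw: "\<And>i. z ^ i \<in> Q.span B"
  shows "algebraic z"
proof (cases "inj_on (\<lambda>i. z ^ i) {0..card B}")
  case False
  then obtain i j where ij: "i \<noteq> j" "z ^ i = z ^ j" unfolding inj_on_def by blast
  define p :: "complex poly" where "p = monom 1 i - monom 1 j"
  have "coeff p i = 1" using ij(1) by (simp add: p_def)
  then have "p \<noteq> 0" by auto
  moreover have "poly p z = 0" using ij(2) by (simp add: p_def poly_monom)
  moreover have "poly_over \<rat> p" by (simp add: p_def poly_over_def)
  ultimately show ?thesis by (auto simp: algebraic_iff_poly_over)
next
  case True
  have "card ((\<lambda>i. z ^ i) ` {0..card B}) = Suc (card B)" using card_image[OF True] by simp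
  then have "Q.dependent ((\<lambda>i. z ^ i) ` {0..card B})"
    using Q.independent_span_bound[OF B] pw by fastforce
  then show ?thesis using algebraic_if_dependent_powers[OF _ True] by simp
qed

lemma finite_over_Q_algebraic:
  assumes "subfield_C K" "finite_over_Q K" "z \<in> K"
  shows "algebraic z"
proof -
  obtain B where B: "finite B" "B \<subseteq> K" "K = Q.span B" using assms(2) finite_over_Q_span by blast
  have "z ^ i \<in> Q.span B" for i using subfield_power[OF assms(1,3)] B(3) by simp
  then show ?thesis by (rule algebraic_if_powers_in_span[OF B(1)])
qed

lemma hom_on_rat_combination:
  assumes L: "subfield_C L" and s: "hom_on L s" and B: "B \<subseteq> L"
  shows "s (\<Sum>b\<in>B. of_rat (c b) * b) = (\<Sum>b\<in>B. of_rat (c b) * s b)"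
proof -
  have "s (\<Sum>b\<in>B. of_rat (c b) * b) = (\<Sum>b\<in>B. s (of_rat (c b) * b))"
    using B by (intro hom_on_sum[OF s L]) (auto intro!: subfield_mult subfield_of_rat L)
  also have "\<dots> = (\<Sum>b\<in>B. of_rat (c b) * s b)"
    using B by (intro sum.cong refl) (auto simp: hom_on_mult[OF s] subfield_of_rat[OF L]
      hom_on_of_rat[OF s L])
  finally show ?thesis .
qed

lemma hom_on_eq_on_span:
  assumes L: "subfield_C L" and s: "hom_on L s" and s': "hom_on L s'"
    and B: "finite B" "B \<subseteq> L" and agree: "\<forall>b\<in>B. s b = s' b" and x: "x \<in> Q.span B"
  shows "s x = s' x"
proof -
  obtain c where c: "x = (\<Sum>b\<in>B. of_rat (c b) * b)"
    using x Q.span_finite[OF B(1)] by (auto simp: rat_scale_def)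
  have "s x = (\<Sum>b\<in>B. of_rat (c b) * s b)" unfolding c by (rule hom_on_rat_combination[OF L s B(2)])
  also have "\<dots> = (\<Sum>b\<in>B. of_rat (c b) * s' b)" using agree by simp
  also have "\<dots> = s' x" unfolding c by (rule hom_on_rat_combination[OF L s' B(2), symmetric])
  finally show ?thesis .
qed

lemma mult_in_span_set_times:
  assumes x: "x \<in> Q.span A" and y: "y \<in> Q.span B"
  shows "x * y \<in> Q.span (A * B)"
proof -
  have ay: "a * y \<in> Q.span (A * B)" if a: "a \<in> A" for a
    using y
  proof (induction y rule: Q.span_induct_alt)
    case base
    then show ?case by (simp add: Q.span_zero)
  next
    case (step c b y)
    have "a * (rat_scale c b + y) = rat_scale c (a * b) + a * y"
      by (simp add: rat_scale_def algebra_simps)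
    moreover have "a * b \<in> Q.span (A * B)" using set_times_intro[OF a step(1)] by (rule Q.span_base)
    ultimately show ?case using step(2) by (simp add: Q.span_add Q.span_scale)
  qed
  show ?thesis using x
  proof (induction x rule: Q.span_induct_alt)
    case base
    then show ?case by (simp add: Q.span_zero)
  next
    case (step c a x)
    have "(rat_scale c a + x) * y = rat_scale c (a * y) + x * y"
      by (simp add: rat_scale_def algebra_simps)
    then show ?case using step ay by (auto intro!: Q.span_add Q.span_scale)
  qed
qed

definition gen_field :: "complex set \<Rightarrow> complex set" where
  "gen_field A = \<Inter> {L. subfield_C L \<and> A \<subseteq> L}"

lemma subfield_gen_field: "subfield_C (gen_field A)"
  unfolding gen_field_def by (rule subfield_C_Inter) auto

lemma gen_field_superset: "A \<subseteq> gen_field A"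
  unfolding gen_field_def by auto

lemma gen_field_least: "subfield_C L \<Longrightarrow> A \<subseteq> L \<Longrightarrow> gen_field A \<subseteq> L"
  unfolding gen_field_def by auto

lemma gen_field_mono: "A \<subseteq> B \<Longrightarrow> gen_field A \<subseteq> gen_field B"
  unfolding gen_field_def by blast

lemma gen_field_Un_gen_field: "gen_field (A \<union> B) = gen_field (gen_field A \<union> B)"
proof
  have "A \<union> B \<subseteq> gen_field A \<union> B" using gen_field_superset[of A] by blast
  then show "gen_field (A \<union> B) \<subseteq> gen_field (gen_field A \<union> B)" by (rule gen_field_mono)
  have "gen_field A \<subseteq> gen_field (A \<union> B)" by (rule gen_field_mono) blast
  moreover have "B \<subseteq> gen_field (A \<union> B)" using gen_field_superset[of "A \<union> B"] by blast
  ultimately show "gen_field (gen_field A \<union> B) \<subseteq> gen_field (A \<union> B)"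
    by (intro gen_field_least subfield_gen_field) blast
qed

lemma compositum_eq_gen_field: "compositum A B = gen_field (A \<union> B)"
  unfolding compositum_def gen_field_def by auto

context
  fixes K1 K2 B1 B2 :: "complex set"
  assumes K1: "subfield_C K1" "B1 \<subseteq> K1" "K1 = Q.span B1"
    and K2: "subfield_C K2" "B2 \<subseteq> K2" "K2 = Q.span B2"
begin

lemma mult_in_span_set_times_bases: "k1 \<in> K1 \<Longrightarrow> k2 \<in> K2 \<Longrightarrow> k1 * k2 \<in> Q.span (B1 * B2)"
  using mult_in_span_set_times K1(3) K2(3) by blast

lemma span_set_times_mult_closed:
  assumes "x \<in> Q.span (B1 * B2)" "y \<in> Q.span (B1 * B2)"
  shows "x * y \<in> Q.span (B1 * B2)"
proof -
  have "(B1 * B2) * (B1 * B2) \<subseteq> Q.span (B1 * B2)"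
  proof
    fix w assume "w \<in> (B1 * B2) * (B1 * B2)"
    then obtain a b c d where abcd: "a \<in> B1" "b \<in> B2" "c \<in> B1" "d \<in> B2" "w = (a * c) * (b * d)"
      by (auto elim!: set_times_elim simp: algebra_simps)
    then have "a * c \<in> K1" "b * d \<in> K2" using K1 K2 by (auto intro!: subfield_mult)
    then show "w \<in> Q.span (B1 * B2)" using abcd(5) mult_in_span_set_times_bases by simp
  qed
  then have "Q.span ((B1 * B2) * (B1 * B2)) \<subseteq> Q.span (B1 * B2)"
    using Q.span_mono Q.span_span by blast
  then show ?thesis using mult_in_span_set_times[OF assms] by blast
qed

lemma subfield_span_set_times:
  assumes "finite B1" "finite B2"
  shows "subfield_C (Q.span (B1 * B2))"
proof (rule subfield_C_algebraicI)
  have "k \<in> Q.span (B1 * B2)" if "k \<in> K1" for k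
    using mult_in_span_set_times_bases[OF that subfield_one[OF K2(1)]] by simp
  then show "\<rat> \<subseteq> Q.span (B1 * B2)" using subfield_Rats[OF K1(1)] by blast
  have "x ^ i \<in> Q.span (B1 * B2)" if "x \<in> Q.span (B1 * B2)" for x i
    using mult_in_span_set_times_bases[OF subfield_one[OF K1(1)] subfield_one[OF K2(1)]]
    by (induction i) (auto intro: span_set_times_mult_closed that)
  then show "algebraic x" if "x \<in> Q.span (B1 * B2)" for x
    using algebraic_if_powers_in_span[OF finite_set_times[OF assms]] that by blast
qed (auto intro: span_set_times_mult_closed Q.span_add Q.span_neg)

lemma gen_field_Un_eq_span:
  assumes "finite B1" "finite B2"
  shows "gen_field (K1 \<union> K2) = Q.span (B1 * B2)"
proof
  have "K1 \<subseteq> Q.span (B1 * B2)" "K2 \<subseteq> Q.span (B1 * B2)"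
    using mult_in_span_set_times_bases subfield_one[OF K1(1)] subfield_one[OF K2(1)]
    by (metis mult.right_neutral mult_1 subsetI)+
  then show "gen_field (K1 \<union> K2) \<subseteq> Q.span (B1 * B2)"
    by (intro gen_field_least subfield_span_set_times assms) auto
  have "B1 * B2 \<subseteq> gen_field (K1 \<union> K2)"
    using gen_field_superset[of "K1 \<union> K2"] K1(2) K2(2)
    by (auto elim!: set_times_elim intro!: subfield_mult subfield_gen_field)
  then show "Q.span (B1 * B2) \<subseteq> gen_field (K1 \<union> K2)"
    by (intro Q.span_minimal subfield_C_subspace subfield_gen_field)
qed

end

lemma finite_over_Q_gen_field_Un:
  assumes "subfield_C K1" "finite_over_Q K1" "subfield_C K2" "finite_over_Q K2"
  shows "finite_over_Q (gen_field (K1 \<union> K2))"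
proof -
  obtain B1 where B1: "finite B1" "B1 \<subseteq> K1" "K1 = Q.span B1" using assms(2) finite_over_Q_span
    by blast
  obtain B2 where B2: "finite B2" "B2 \<subseteq> K2" "K2 = Q.span B2" using assms(4) finite_over_Q_span
    by blast
  have "gen_field (K1 \<union> K2) = Q.span (B1 * B2)"
    using gen_field_Un_eq_span[OF assms(1) B1(2,3) assms(3) B2(2,3) B1(1) B2(1)] .
  then show ?thesis unfolding finite_over_Q_span
    using finite_set_times[OF B1(1) B2(1)] Q.span_superset by blast
qed

section \<open>Extending embeddings\<close>

definition adjoin :: "complex set \<Rightarrow> complex \<Rightarrow> complex set" where
  "adjoin M a = {poly p a | p. poly_over M p}"

lemma adjoinI: "poly_over M p \<Longrightarrow> poly p a \<in> adjoin M a"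
  unfolding adjoin_def by blast

lemma adjoinE: "w \<in> adjoin M a \<Longrightarrow> (\<And>p. poly_over M p \<Longrightarrow> w = poly p a \<Longrightarrow> P) \<Longrightarrow> P"
  unfolding adjoin_def by blast

lemma adjoin_base: "subfield_C M \<Longrightarrow> x \<in> M \<Longrightarrow> x \<in> adjoin M a"
  using adjoinI[OF poly_over_const, of M x a] by simp

lemma adjoin_generator: "subfield_C M \<Longrightarrow> a \<in> adjoin M a"
  using adjoinI[OF poly_over_pX, of M a] by simp

lemma adjoin_add: "subfield_C M \<Longrightarrow> x \<in> adjoin M a \<Longrightarrow> y \<in> adjoin M a \<Longrightarrow> x + y \<in> adjoin M a"
  by (metis adjoinE adjoinI poly_over_add poly_add)

lemma adjoin_mult: "subfield_C M \<Longrightarrow> x \<in> adjoin M a \<Longrightarrow> y \<in> adjoin M a \<Longrightarrow> x * y \<in> adjoin M a"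
  by (metis adjoinE adjoinI poly_over_mult poly_mult)

lemma adjoin_uminus: "subfield_C M \<Longrightarrow> x \<in> adjoin M a \<Longrightarrow> - x \<in> adjoin M a"
proof -
  assume M: "subfield_C M" and x: "x \<in> adjoin M a"
  from x obtain p where p: "poly_over M p" "x = poly p a" by (rule adjoinE)
  have "poly_over M (0 - p)" using M p by (intro poly_over_diff poly_over_0)
  moreover have "poly (0 - p) a = - x" using p by simp
  ultimately show ?thesis using adjoinI by metis
qed

lemma adjoin_subset: "subfield_C L \<Longrightarrow> M \<subseteq> L \<Longrightarrow> a \<in> L \<Longrightarrow> adjoin M a \<subseteq> L"
  by (auto elim!: adjoinE intro!: poly_over_in_subfield dest: poly_over_mono)

lemma subfield_adjoin:
  assumes M: "subfield_C M" and al: "\<And>w. w \<in> adjoin M a \<Longrightarrow> algebraic w"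
  shows "subfield_C (adjoin M a)"
proof (rule subfield_C_algebraicI)
  show "\<rat> \<subseteq> adjoin M a" using subfield_Rats[OF M] adjoin_base[OF M] by blast
qed (use M al adjoin_add adjoin_mult adjoin_uminus in auto)

lemma poly_map_hom_on_eq_if_same_value:
  assumes M: "subfield_C M" and t: "hom_on M t" and g: "is_min_poly M a g"
    and b: "poly (map_poly t g) b = 0"
    and p: "poly_over M p" and r: "poly_over M r" and pr: "poly r a = poly p a"
  shows "poly (map_poly t r) b = poly (map_poly t p) b"
proof -
  have "poly (r - p) a = 0" using pr by simp
  then obtain h where h: "poly_over M h" "r - p = g * h"
    using is_min_poly_dvd[OF M g poly_over_diff[OF M r p]] by blast
  have "map_poly t r - map_poly t p = map_poly t g * map_poly t h"
    using map_poly_hom_on_diff[OF t M r p] map_poly_hom_on_mult[OF t M _ h(1)] h(2) g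
    by (simp add: is_min_poly_def)
  then show ?thesis using b by (metis mult_zero_left poly_diff poly_mult eq_iff_diff_eq_0)
qed

lemma hom_on_extend_adjoin:
  assumes M: "subfield_C M" and t: "hom_on M t" and g: "is_min_poly M a g"
    and b: "poly (map_poly t g) b = 0"
  shows "\<exists>t'. hom_on (adjoin M a) t' \<and> (\<forall>x\<in>M. t' x = t x) \<and> t' a = b"
proof -
  define t' where "t' w = poly (map_poly t (SOME p. poly_over M p \<and> poly p a = w)) b" for w
  have t': "t' (poly p a) = poly (map_poly t p) b" if p: "poly_over M p" for p
  proof -
    have "\<exists>r. poly_over M r \<and> poly r a = poly p a" using p by blast
    then show ?thesis unfolding t'_def
      by (rule someI2_ex) (use poly_map_hom_on_eq_if_same_value[OF M t g b p] in blast)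
  qed
  have "hom_on (adjoin M a) t'"
    unfolding hom_on_def
  proof (intro conjI ballI)
    show "t' 1 = 1"
      using t'[OF poly_over_const[OF M subfield_one[OF M]]] map_poly_hom_on_const[OF t M]
        hom_on_one[OF t]
      by simp
  next
    fix x y assume "x \<in> adjoin M a" "y \<in> adjoin M a"
    then obtain p q where p: "poly_over M p" "x = poly p a" and q: "poly_over M q" "y = poly q a"
      by (auto elim!: adjoinE)
    show "t' (x + y) = t' x + t' y"
      using t'[OF poly_over_add[OF M p(1) q(1)]] t'[OF p(1)] t'[OF q(1)] p(2) q(2)
        map_poly_hom_on_add[OF t M p(1) q(1)] by simp
    show "t' (x * y) = t' x * t' y"
      using t'[OF poly_over_mult[OF M p(1) q(1)]] t'[OF p(1)] t'[OF q(1)] p(2) q(2)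
        map_poly_hom_on_mult[OF t M p(1) q(1)] by simp
  qed
  moreover have "t' x = t x" if "x \<in> M" for x
    using t'[OF poly_over_const[OF M that]] map_poly_hom_on_const[OF t M] by simp
  moreover have "t' a = b"
    using t'[OF poly_over_pX[OF M]] map_poly_hom_on_pX[OF t M] by simp
  ultimately show ?thesis by blast
qed

lemma map_min_poly_has_root:
  assumes M: "subfield_C M" and t: "hom_on M t" and g: "is_min_poly M a g"
  shows "\<exists>b. poly (map_poly t g) b = 0"
proof -
  have "coeff (map_poly t g) (degree g) = 1"
    using g hom_on_one[OF t] by (simp add: coeff_map_poly_hom_on[OF t M] is_min_poly_def)
  then have "degree (map_poly t g) \<ge> degree g" by (metis le_degree one_neq_zero)
  then have "degree (map_poly t g) \<noteq> 0" using is_min_poly_degree[OF g] by simp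
  then have "\<not> constant (poly (map_poly t g))" by (simp add: constant_degree)
  then show ?thesis using fundamental_theorem_of_algebra by blast
qed

lemma hom_on_extend:
  assumes L: "subfield_C L" "finite B" "B \<subseteq> L" "L = Q.span B"
  shows "subfield_C M \<Longrightarrow> M \<subseteq> L \<Longrightarrow> hom_on M t \<Longrightarrow> \<exists>s. hom_on L s \<and> (\<forall>x\<in>M. s x = t x)"
proof (induction "card (B - M)" arbitrary: M t rule: less_induct)
  case less
  have finL: "finite_over_Q L" using L finite_over_Q_span by blast
  show ?case
  proof (cases "B \<subseteq> M")
    case True
    then have "L \<subseteq> M" using L(4) Q.span_minimal subfield_C_subspace[OF less.prems(1)] by blast
    then have "L = M" using less.prems(2) by blast
    then show ?thesis using less.prems(3) by blast
  next
    case False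
    then obtain c where c: "c \<in> B" "c \<notin> M" by blast
    have cL: "c \<in> L" using c L(3) by blast
    have algc: "algebraic c" using finite_over_Q_algebraic[OF L(1) finL cL] .
    obtain g where g: "is_min_poly M c g" using min_poly_exists[OF less.prems(1) algc] by blast
    obtain b where b: "poly (map_poly t g) b = 0"
      using map_min_poly_has_root[OF less.prems(1,3) g] by blast
    define M' where "M' = adjoin M c"
    have M'L: "M' \<subseteq> L" unfolding M'_def using adjoin_subset[OF L(1) less.prems(2) cL] .
    have M'sf: "subfield_C M'" unfolding M'_def
      using subfield_adjoin[OF less.prems(1)] finite_over_Q_algebraic[OF L(1) finL] M'L
        unfolding M'_def by blast
    obtain t' where t': "hom_on M' t'" "\<forall>x\<in>M. t' x = t x"
      using hom_on_extend_adjoin[OF less.prems(1,3) g b] unfolding M'_def by blast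
    have MM': "M \<subseteq> M'" unfolding M'_def using adjoin_base[OF less.prems(1)] by blast
    have cM': "c \<in> M'" unfolding M'_def using adjoin_generator[OF less.prems(1)] .
    have "B - M' \<subset> B - M" using MM' cM' c by blast
    then have "card (B - M') < card (B - M)" using L(2) by (meson finite_Diff psubset_card_mono)
    from less.hyps[OF this M'sf M'L t'(1)] obtain s where s: "hom_on L s" "\<forall>x\<in>M'. s x = t' x"
      by blast
    have "\<forall>x\<in>M. s x = t x" using s(2) t'(2) MM' by auto
    then show ?thesis using s(1) by blast
  qed
qed

lemma hom_on_map_to_root:
  assumes L: "subfield_C L" "finite_over_Q L" and z: "z \<in> L" and g: "is_min_poly \<rat> z g"
    and y: "poly g y = 0"
  shows "\<exists>s. hom_on L s \<and> s z = y"
proof -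
  obtain B where B: "finite B" "B \<subseteq> L" "L = Q.span B" using L(2) finite_over_Q_span by blast
  have QL: "\<rat> \<subseteq> L" using subfield_Rats[OF L(1)] by blast
  define M where "M = adjoin \<rat> z"
  have MsubL: "M \<subseteq> L" unfolding M_def using adjoin_subset[OF L(1) QL z] .
  have Msf: "subfield_C M" unfolding M_def
    using subfield_adjoin[OF subfield_C_Rats] finite_over_Q_algebraic[OF L] MsubL unfolding M_def
      by blast
  have "poly (map_poly id g) y = 0" using y by simp
  from hom_on_extend_adjoin[OF subfield_C_Rats hom_on_id g this] obtain t where
    t: "hom_on M t" "t z = y" unfolding M_def by blast
  from hom_on_extend[OF L(1) B Msf MsubL t(1)] obtain s where "hom_on L s" "\<forall>x\<in>M. s x = t x"
    by blast
  moreover have "z \<in> M" unfolding M_def by (rule adjoin_generator[OF subfield_C_Rats])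
  ultimately show ?thesis using t(2) by auto
qed

section \<open>Finite Galois fields\<close>

lemma finite_galois_subfield: "finite_galois_over_Q K \<Longrightarrow> subfield_C K"
  by (simp add: finite_galois_over_Q_def)

lemma finite_galois_finite: "finite_galois_over_Q K \<Longrightarrow> finite_over_Q K"
  by (simp add: finite_galois_over_Q_def)

lemma finite_galois_algebraic: "finite_galois_over_Q K \<Longrightarrow> z \<in> K \<Longrightarrow> algebraic z"
  using finite_over_Q_algebraic finite_galois_subfield finite_galois_finite by blast

lemma finite_galois_root: "finite_galois_over_Q K \<Longrightarrow> z \<in> K \<Longrightarrow> irreducible p \<Longrightarrow>
  poly (of_rat_poly p) z = 0 \<Longrightarrow> poly (of_rat_poly p) y = 0 \<Longrightarrow> y \<in> K"
  unfolding finite_galois_over_Q_def normal_over_Q_def by blast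

lemma hom_on_galois_closed:
  assumes K: "finite_galois_over_Q K" and s: "hom_on K s" and z: "z \<in> K"
  shows "s z \<in> K"
proof -
  obtain p where p: "irreducible p" "poly (of_rat_poly p) z = 0"
    using algebraic_irreducible_root[OF finite_galois_algebraic[OF K z]] by blast
  have "poly (of_rat_poly p) (s z) = 0"
    by (rule hom_on_root[OF finite_galois_subfield[OF K] s z poly_over_of_rat_poly p(2)])
  then show ?thesis using finite_galois_root[OF K z p] by blast
qed

lemma hom_on_galois_bij:
  assumes K: "finite_galois_over_Q K" and s: "hom_on K s"
  shows "bij_betw s K K"
proof -
  have sf: "subfield_C K" using finite_galois_subfield[OF K] .
  have "k \<in> s ` K" if k: "k \<in> K" for k
  proof -
    obtain p where p: "irreducible p" "poly (of_rat_poly p) k = 0"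
      using algebraic_irreducible_root[OF finite_galois_algebraic[OF K k]] by blast
    define R where "R = {y. poly (of_rat_poly p) y = 0}"
    have "of_rat_poly p \<noteq> 0" using p(1) of_rat_poly_eq_0_iff by auto
    then have "finite R" unfolding R_def by (rule poly_roots_finite)
    moreover have RK: "R \<subseteq> K" unfolding R_def using finite_galois_root[OF K k p] by blast
    moreover have "s ` R \<subseteq> R"
      using RK hom_on_root[OF sf s _ poly_over_of_rat_poly] by (auto simp: R_def)
    moreover have "inj_on s R" using hom_on_inj[OF s sf] RK by (rule inj_on_subset)
    ultimately have "s ` R = R" using endo_inj_surj by blast
    then show "k \<in> s ` K" using p(2) RK by (auto simp: R_def)
  qed
  then show ?thesis
    using hom_on_inj[OF s sf] hom_on_galois_closed[OF K s] by (auto simp: bij_betw_def)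
qed

lemma hom_on_galois_field_auts: "finite_galois_over_Q K \<Longrightarrow> hom_on K s \<Longrightarrow> s \<in> field_auts K"
  unfolding field_auts_def using hom_on_galois_bij[of K s] by (auto simp: hom_on_def)

lemma cnj_field_auts: "finite_galois_over_Q K \<Longrightarrow> cnj \<in> field_auts K"
  using hom_on_galois_field_auts hom_on_cnj by blast

lemma hom_on_comp:
  assumes K: "finite_galois_over_Q L" and s: "hom_on L s" and t: "hom_on L t"
  shows "hom_on L (s \<circ> t)"
  unfolding hom_on_def
proof (intro conjI ballI)
  show "(s \<circ> t) 1 = 1" using hom_on_one[OF s] hom_on_one[OF t] by simp
  fix x y assume x: "x \<in> L" and y: "y \<in> L"
  have tx: "t x \<in> L" and ty: "t y \<in> L" using hom_on_galois_closed[OF K t] x y by auto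
  show "(s \<circ> t) (x + y) = (s \<circ> t) x + (s \<circ> t) y"
    using hom_on_add[OF t x y] hom_on_add[OF s tx ty] by simp
  show "(s \<circ> t) (x * y) = (s \<circ> t) x * (s \<circ> t) y"
    using hom_on_mult[OF t x y] hom_on_mult[OF s tx ty] by simp
qed

lemma finite_galois_gen_field_Un:
  assumes K1: "finite_galois_over_Q K1" and K2: "finite_galois_over_Q K2"
  shows "finite_galois_over_Q (gen_field (K1 \<union> K2))"
proof -
  define L where "L = gen_field (K1 \<union> K2)"
  have L: "subfield_C L" "finite_over_Q L"
    using finite_over_Q_gen_field_Un[OF finite_galois_subfield[OF K1] finite_galois_finite[OF K1]
        finite_galois_subfield[OF K2] finite_galois_finite[OF K2]] subfield_gen_field
    unfolding L_def by auto
  have "normal_over_Q L"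
    unfolding normal_over_Q_def
  proof (intro ballI allI impI)
    fix x p y assume x: "x \<in> L" and p: "irreducible p \<and> poly (of_rat_poly p) x = 0"
      and y: "poly (of_rat_poly p) y = 0"
    obtain g where g: "is_min_poly \<rat> x g"
      using min_poly_exists[OF subfield_C_Rats finite_over_Q_algebraic[OF L x]] by blast
    have "poly g y = 0"
      using is_min_poly_root_if_irreducible_root[OF conjunct1[OF p] conjunct2[OF p] g y] .
    then obtain s where s: "hom_on L s" "s x = y" using hom_on_map_to_root[OF L x g] by blast
    have K1L: "K1 \<subseteq> L" and K2L: "K2 \<subseteq> L" using gen_field_superset[of "K1 \<union> K2"] unfolding L_def
      by auto
    have "K1 \<union> K2 \<subseteq> {w \<in> L. s w \<in> L}"
      using hom_on_galois_closed[OF K1 hom_on_subset[OF s(1) K1L]]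
        hom_on_galois_closed[OF K2 hom_on_subset[OF s(1) K2L]] K1L K2L
      by blast
    then have "L \<subseteq> {w \<in> L. s w \<in> L}" unfolding L_def
      by (intro gen_field_least subfield_C_preimage[OF L(1) s(1), unfolded L_def])
    then show "y \<in> L" using x s(2) by blast
  qed
  then show ?thesis using L unfolding L_def finite_galois_over_Q_def by blast
qed

lemma finite_galois_gen_field_Union:
  assumes F: "finite_galois_over_Q F"
  shows "finite S \<Longrightarrow> (\<forall>K\<in>S. finite_galois_over_Q K) \<Longrightarrow> finite_galois_over_Q (gen_field (F \<union> \<Union> S))"
proof (induction S rule: finite_induct)
  case empty
  have "gen_field F \<subseteq> F" using gen_field_least[OF finite_galois_subfield[OF F]] by blast
  then have "gen_field F = F" using gen_field_superset[of F] by blast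
  then show ?case using F by simp
next
  case (insert K S)
  have "gen_field (F \<union> \<Union> (insert K S)) = gen_field ((F \<union> \<Union> S) \<union> K)" by (simp add: Un_ac)
  also have "\<dots> = gen_field (gen_field (F \<union> \<Union> S) \<union> K)" by (rule gen_field_Un_gen_field)
  finally show ?case using finite_galois_gen_field_Un insert by simp
qed

lemma compositum_Qab_subset:
  assumes F: "subfield_C F"
  shows "compositum F Qab \<subseteq> \<Union>{gen_field (F \<union> \<Union>S) | S. finite S \<and> (\<forall>K\<in>S. abelian_galois_over_Q K)}"
    (is "_ \<subseteq> \<Union>?\<K>")
proof -
  have "subfield_C (\<Union>?\<K>)"
  proof (rule subfield_C_Union_directed)
    fix K1 K2 assume "K1 \<in> ?\<K>" "K2 \<in> ?\<K>"
    then obtain S1 S2 where S: "K1 = gen_field (F \<union> \<Union>S1)" "K2 = gen_field (F \<union> \<Union>S2)"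
      "finite (S1 \<union> S2)" "\<forall>K\<in>S1 \<union> S2. abelian_galois_over_Q K" by auto
    then have "gen_field (F \<union> \<Union>(S1 \<union> S2)) \<in> ?\<K>" by blast
    moreover have "K1 \<union> K2 \<subseteq> gen_field (F \<union> \<Union>(S1 \<union> S2))"
      unfolding S(1,2) by (intro Un_least gen_field_mono) auto
    ultimately show "\<exists>K\<in>?\<K>. K1 \<union> K2 \<subseteq> K" by blast
  next
    show "?\<K> \<noteq> {}" by blast
  next
    show "subfield_C K" if "K \<in> ?\<K>" for K using that subfield_gen_field by blast
  qed
  moreover have "F \<subseteq> \<Union>?\<K>"
  proof -
    have "gen_field (F \<union> \<Union>{}) \<in> ?\<K>" by blast
    then show ?thesis using gen_field_superset[of "F \<union> \<Union>{}"] by blast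
  qed
  moreover have "Qab \<subseteq> \<Union>?\<K>"
  proof
    fix z assume "z \<in> Qab"
    then obtain K where K: "abelian_galois_over_Q K" "z \<in> K" unfolding Qab_def by blast
    then have "z \<in> gen_field (F \<union> \<Union>{K})" using gen_field_superset[of "F \<union> \<Union>{K}"] by auto
    moreover have "gen_field (F \<union> \<Union>{K}) \<in> ?\<K>" using K(1) by blast
    ultimately show "z \<in> \<Union>?\<K>" by blast
  qed
  ultimately show ?thesis unfolding compositum_eq_gen_field by (intro gen_field_least) auto
qed

lemma coeff_linear_power_pred:
  "coeff ([:c, 1:] ^ Suc n) n = of_nat (Suc n) * (c :: 'a :: comm_semiring_1)"
proof (induction n)
  case 0
  then show ?case by simp
next
  case (Suc n)
  define q where "q = [:c, 1:] ^ Suc n"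
  have "[:c, 1:] ^ Suc (Suc n) = [:c, 1:] * q" unfolding q_def by (simp only: power_Suc)
  also have "\<dots> = smult c q + pCons 0 q" by (simp add: mult_pCons_left)
  finally have e: "coeff ([:c, 1:] ^ Suc (Suc n)) (Suc n) = c * coeff q (Suc n) + coeff q n"
    by simp
  have q1: "coeff q (Suc n) = 1" unfolding q_def by (rule coeff_linear_power)
  have q2: "coeff q n = of_nat (Suc n) * c" unfolding q_def by (rule Suc.IH)
  show ?case unfolding e q1 q2 by (simp add: algebra_simps)
qed

lemma monic_single_root_eq_power:
  fixes g :: "complex poly"
  shows "lead_coeff g = 1 \<Longrightarrow> (\<And>y. poly g y = 0 \<Longrightarrow> y = c) \<Longrightarrow> g = [:- c, 1:] ^ degree g"
proof (induction "degree g" arbitrary: g)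
  case 0
  then have "g = [:lead_coeff g:]" by (metis degree_0_id)
  then have "g = 1" using 0(2) by (simp add: one_pCons)
  then show ?case by simp
next
  case (Suc n)
  have "\<not> constant (poly g)" using Suc(2) by (simp add: constant_degree)
  then obtain y where "poly g y = 0" using fundamental_theorem_of_algebra by blast
  then have "poly g c = 0" using Suc(4) by metis
  then have "[:- c, 1:] dvd g" by (simp add: poly_eq_0_iff_dvd)
  then obtain g' where g': "g = [:- c, 1:] * g'" by (rule dvdE)
  have g'0: "g' \<noteq> 0"
  proof
    assume "g' = 0"
    then have "g = 0" using g' by (simp only: mult_zero_right)
    then show False using Suc(3) by simp
  qed
  have e: "degree ([:- c, 1:] * g') = degree [:- c, 1:] + degree g'"
    by (rule degree_mult_eq) (auto simp: g'0)
  have dg: "degree g' = n" using e Suc(2) unfolding g'[symmetric] by simp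
  have e2: "lead_coeff ([:- c, 1:] * g') = lead_coeff [:- c, 1:] * lead_coeff g'"
    by (rule lead_coeff_mult)
  have lg: "lead_coeff g' = 1" using e2 Suc(3) unfolding g'[symmetric] by simp
  have roots: "y = c" if "poly g' y = 0" for y
  proof -
    have "poly g y = 0" unfolding g' poly_mult using that by (simp only: mult_zero_right)
    then show ?thesis using Suc(4) by blast
  qed
  have "g' = [:- c, 1:] ^ degree g'" using Suc(1)[OF dg[symmetric] lg] roots by blast
  then have "g = [:- c, 1:] * [:- c, 1:] ^ n" using g' dg by (simp only:)
  then have "g = [:- c, 1:] ^ Suc n" by (simp only: power_Suc)
  then show ?case unfolding Suc(2)[symmetric] .
qed

text \<open>All roots of the minimal polynomial of z are conjugates of z, hence equal to z; so the
  minimal polynomial is (X - z)^d, and its rational coefficient of X^(d-1) is -d z.\<close>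

lemma Rats_if_fixed_by_homs:
  assumes L: "subfield_C L" "finite_over_Q L" and z: "z \<in> L"
    and fx: "\<And>s. hom_on L s \<Longrightarrow> s z = z"
  shows "z \<in> \<rat>"
proof -
  obtain g where g: "is_min_poly \<rat> z g"
    using min_poly_exists[OF subfield_C_Rats finite_over_Q_algebraic[OF L z]] by blast
  have roots: "y = z" if "poly g y = 0" for y
    using hom_on_map_to_root[OF L z g that] fx by metis
  define d where "d = degree g"
  have d1: "d \<ge> 1" using is_min_poly_degree[OF g] by (simp add: d_def)
  have "g = [:- z, 1:] ^ d" unfolding d_def using monic_single_root_eq_power[of g z] g roots
    by (auto simp: is_min_poly_def)
  then obtain n where n: "d = Suc n" "g = [:- z, 1:] ^ Suc n" using d1 by (cases d) auto
  have "coeff g n = coeff ([:- z, 1:] ^ Suc n) n" using n(2) by (simp only:)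
  also have "\<dots> = of_nat (Suc n) * (- z)" by (rule coeff_linear_power_pred)
  finally have "coeff g n = of_nat (Suc n) * (- z)" .
  moreover have "coeff g n \<in> \<rat>" using g by (simp add: is_min_poly_def poly_over_coeff)
  ultimately have "of_nat (Suc n) * (- z) \<in> \<rat>" by simp
  then have w: "of_nat (Suc n) * z \<in> \<rat>" by simp
  have nz: "(of_nat (Suc n) :: complex) \<noteq> 0" by (simp del: of_nat_Suc)
  have "(of_nat (Suc n) * z) / of_nat (Suc n) \<in> \<rat>" by (rule Rats_divide[OF w Rats_of_nat])
  then show ?thesis using nz by simp
qed

section \<open>Conjugates\<close>

definition embeddings :: "complex set \<Rightarrow> (complex \<Rightarrow> complex) set" where
  "embeddings K = (\<lambda>s. restrict s K) ` {s. hom_on K s}"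

definition conjugates :: "complex set \<Rightarrow> complex \<Rightarrow> complex set" where
  "conjugates L t = (\<lambda>s. s t) ` {s. hom_on L s}"

lemma finite_embeddings:
  assumes K: "subfield_C K" "finite_over_Q K"
  shows "finite (embeddings K)"
proof -
  obtain B where B: "finite B" "B \<subseteq> K" "K = Q.span B" using K(2) finite_over_Q_span by blast
  have "\<forall>b\<in>B. \<exists>p. p \<noteq> 0 \<and> poly_over \<rat> p \<and> poly p b = 0"
    using finite_over_Q_algebraic[OF K] B(2) by (auto simp: algebraic_iff_poly_over)
  then obtain p where p: "\<And>b. b \<in> B \<Longrightarrow> p b \<noteq> 0 \<and> poly_over \<rat> (p b) \<and> poly (p b) b = 0"
    by metis
  define R where "R b = {y. poly (p b) y = 0}" for b
  have "(\<lambda>r. restrict r B) ` embeddings K \<subseteq> PiE B R"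
    using B(2) p hom_on_root[OF K(1)] by (fastforce simp: embeddings_def R_def)
  moreover have "finite (PiE B R)"
    using p poly_roots_finite by (intro finite_PiE B(1)) (auto simp: R_def)
  moreover have "inj_on (\<lambda>r. restrict r B) (embeddings K)"
  proof (rule inj_onI)
    fix r r' assume "r \<in> embeddings K" "r' \<in> embeddings K" and eq: "restrict r B = restrict r' B"
    then obtain s s' where s: "hom_on K s" "r = restrict s K"
      and s': "hom_on K s'" "r' = restrict s' K"
      unfolding embeddings_def by blast
    have "\<forall>b\<in>B. s b = s' b" using eq B(2) s(2) s'(2) by (metis in_mono restrict_apply')
    then have "s x = s' x" if "x \<in> K" for x
      using hom_on_eq_on_span[OF K(1) s(1) s'(1) B(1,2)] that B(3) by blast
    then show "r = r'" using s(2) s'(2) by auto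
  qed
  ultimately show ?thesis by (meson finite_imageD finite_subset)
qed

lemma finite_conjugates:
  assumes L: "subfield_C L" "finite_over_Q L" and t: "t \<in> L"
  shows "finite (conjugates L t)"
proof -
  obtain p where p: "p \<noteq> 0" "poly_over \<rat> p" "poly p t = 0"
    using finite_over_Q_algebraic[OF L t] by (auto simp: algebraic_iff_poly_over)
  have "conjugates L t \<subseteq> {y. poly p y = 0}"
    using hom_on_root[OF L(1) _ t p(2,3)] by (auto simp: conjugates_def)
  then show ?thesis using poly_roots_finite[OF p(1)] by (rule finite_subset)
qed

lemma self_in_conjugates: "t \<in> conjugates L t"
  unfolding conjugates_def by (rule image_eqI[of _ _ id]) (simp_all add: hom_on_id)

lemma conjugates_subset:
  "finite_galois_over_Q L \<Longrightarrow> t \<in> L \<Longrightarrow> conjugates L t \<subseteq> L"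
  unfolding conjugates_def using hom_on_galois_closed by blast

lemma hom_on_image_conjugates:
  assumes L: "finite_galois_over_Q L" and s: "hom_on L s" and t: "t \<in> L"
  shows "s ` conjugates L t = conjugates L t"
proof (rule endo_inj_surj)
  show "finite (conjugates L t)"
    using finite_conjugates[OF finite_galois_subfield[OF L] finite_galois_finite[OF L] t] .
  show "s ` conjugates L t \<subseteq> conjugates L t"
    unfolding conjugates_def using hom_on_comp[OF L s] by (auto intro!: image_eqI[of _ _ "s \<circ> _"])
  show "inj_on s (conjugates L t)"
    using hom_on_inj[OF s finite_galois_subfield[OF L]] conjugates_subset[OF L t]
      by (rule inj_on_subset)
qed

lemma prod_conjugates_Rats:
  assumes L: "finite_galois_over_Q L" and t: "t \<in> L"
  shows "(\<Prod>w\<in>conjugates L t. w) \<in> \<rat>"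
proof (rule Rats_if_fixed_by_homs[OF finite_galois_subfield[OF L] finite_galois_finite[OF L]])
  have sub: "conjugates L t \<subseteq> L" by (rule conjugates_subset[OF L t])
  then show "(\<Prod>w\<in>conjugates L t. w) \<in> L"
    by (intro subfield_prod[OF finite_galois_subfield[OF L]]) blast
  fix s assume s: "hom_on L s"
  have "s (\<Prod>w\<in>conjugates L t. w) = (\<Prod>w\<in>conjugates L t. s w)"
    using sub by (intro hom_on_prod[OF s finite_galois_subfield[OF L]]) blast
  also have "\<dots> = (\<Prod>w\<in>s ` conjugates L t. w)"
    using prod.reindex[OF inj_on_subset[OF hom_on_inj[OF s finite_galois_subfield[OF L]] sub],
        of "\<lambda>w. w"]
    by simp
  finally show "s (\<Prod>w\<in>conjugates L t. w) = (\<Prod>w\<in>conjugates L t. w)"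
    unfolding hom_on_image_conjugates[OF L s t] .
qed

lemma int_power_eq_squarefree_power_dvd:
  fixes a u v :: int and m k :: nat
  assumes sq: "squarefree a" and a1: "a \<noteq> 1" and a2: "a \<noteq> -1" and m: "m > 0"
    and v: "v \<noteq> 0" and eq: "u ^ m = a ^ k * v ^ m"
  shows "m dvd k"
proof -
  have a0: "a \<noteq> 0" using sq by auto
  have u0: "u \<noteq> 0" using eq a0 v m by (auto simp: power_0_left)
  have "\<not> is_unit a" using a1 a2 by auto
  then obtain p where p: "p dvd a" "prime p" using prime_divisor_exists[OF a0] by blast
  have "multiplicity p a = 1"
    using squarefree_factorial_semiring'[OF a0] sq p a0 by (simp add: in_prime_factors_iff)
  moreover have pe: "prime_elem p" using p(2) by (rule prime_imp_prime_elem)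
  ultimately have "multiplicity p (a ^ k * v ^ m) = k + m * multiplicity p v"
    using a0 v
    by (simp add: prime_elem_multiplicity_mult_distrib[OF pe] prime_elem_multiplicity_power_distrib[OF pe])
  moreover have "multiplicity p (u ^ m) = m * multiplicity p u"
    using u0 by (simp add: prime_elem_multiplicity_power_distrib[OF pe])
  ultimately have "k = m * (multiplicity p u - multiplicity p v)"
    using eq by (simp add: diff_mult_distrib2)
  then show ?thesis by simp
qed

lemma rat_power_eq_squarefree_power_dvd:
  fixes a :: int and q :: rat and m k :: nat
  assumes sq: "squarefree a" and a1: "a \<noteq> 1" and a2: "a \<noteq> -1" and m: "m > 0"
    and eq: "q ^ m = of_int (a ^ k)"
  shows "m dvd k"
proof -
  obtain u v where uv: "quotient_of q = (u, v)" by (cases "quotient_of q")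
  have v: "v > 0" and q: "q = of_int u / of_int v"
    using quotient_of_denom_pos[OF uv] quotient_of_div[OF uv] by auto
  then have "(of_int u / of_int v) ^ m = (of_int (a ^ k) :: rat)" using eq by simp
  then have "(of_int (u ^ m) :: rat) = of_int (a ^ k * v ^ m)"
    using v by (simp add: power_divide field_simps)
  then have "u ^ m = a ^ k * v ^ m" by (rule of_int_eq_iff[THEN iffD1])
  with v show ?thesis by (intro int_power_eq_squarefree_power_dvd[OF sq a1 a2 m, of v u]) auto
qed

lemma dvd_card_conjugates:
  fixes a :: int
  assumes sq: "squarefree a" and a1: "a \<noteq> 1" and a2: "a \<noteq> -1" and m: "m > 0"
    and L: "finite_galois_over_Q L" and t: "t \<in> L" and tm: "t ^ m = of_int (a ^ k)"
  shows "m dvd k * card (conjugates L t)"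
proof -
  define n where "n = (\<Prod>w\<in>conjugates L t. w)"
  have conj_pow: "w ^ m = of_int (a ^ k)" if w: "w \<in> conjugates L t" for w
  proof -
    obtain s where s: "hom_on L s" "w = s t" using w unfolding conjugates_def by blast
    have "w ^ m = s (t ^ m)" using hom_on_power[OF s(1) finite_galois_subfield[OF L] t] s(2) by simp
    also have "\<dots> = of_int (a ^ k)"
      unfolding tm by (rule hom_on_of_int[OF s(1) finite_galois_subfield[OF L]])
    finally show ?thesis .
  qed
  have "n ^ m = (\<Prod>w\<in>conjugates L t. w ^ m)" unfolding n_def by (rule prod_power_distrib)
  also have "\<dots> = of_int (a ^ (k * card (conjugates L t)))"
    using conj_pow by (simp add: power_mult)
  finally have nm: "n ^ m = of_int (a ^ (k * card (conjugates L t)))" .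
  obtain q where "n = of_rat q" using prod_conjugates_Rats[OF L t]
    by (auto simp: n_def elim: Rats_cases)
  with nm have "q ^ m = of_int (a ^ (k * card (conjugates L t)))"
    by (metis of_rat_eq_iff of_rat_of_int_eq of_rat_power)
  then show ?thesis by (rule rat_power_eq_squarefree_power_dvd[OF sq a1 a2 m])
qed

lemma hom_on_agree_if_fixed:
  assumes L: "finite_galois_over_Q L" and FL: "F \<subseteq> L" and t: "t \<in> L"
    and fixed: "\<And>s. hom_on L s \<Longrightarrow> \<forall>f\<in>F. s f = f \<Longrightarrow> s t = t"
    and s: "hom_on L s" and s': "hom_on L s'" and agree: "\<forall>f\<in>F. s f = s' f"
  shows "s t = s' t"
proof -
  have Lsf: "subfield_C L" by (rule finite_galois_subfield[OF L])
  have bij: "bij_betw s L L" by (rule hom_on_galois_bij[OF L s])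
  define s_inv where "s_inv = inv_into L s"
  have "hom_on L (s_inv \<circ> s')"
    unfolding s_inv_def by (rule hom_on_comp[OF L hom_on_inv_into[OF Lsf s bij] s'])
  moreover have "\<forall>f\<in>F. (s_inv \<circ> s') f = f"
    using agree FL bij inv_into_f_f by (fastforce simp: s_inv_def bij_betw_def)
  ultimately have "s_inv (s' t) = t" using fixed[of "s_inv \<circ> s'"] by simp
  moreover have "s' t \<in> s ` L" using hom_on_galois_closed[OF L s' t] bij by (simp add: bij_betw_def)
  ultimately show ?thesis unfolding s_inv_def by (metis f_inv_into_f)
qed

lemma card_conjugates_le_card_embeddings:
  assumes L: "finite_galois_over_Q L" and F: "subfield_C F" "finite_over_Q F" "F \<subseteq> L"
    and t: "t \<in> L" and fixed: "\<And>s. hom_on L s \<Longrightarrow> \<forall>f\<in>F. s f = f \<Longrightarrow> s t = t"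
  shows "card (conjugates L t) \<le> card (embeddings F)"
proof -
  define lift where "lift r = (SOME s. hom_on L s \<and> restrict s F = r)" for r
  have "conjugates L t \<subseteq> (\<lambda>r. lift r t) ` embeddings F"
  proof
    fix w assume "w \<in> conjugates L t"
    then obtain s where s: "hom_on L s" "w = s t" unfolding conjugates_def by blast
    have "hom_on L (lift (restrict s F)) \<and> restrict (lift (restrict s F)) F = restrict s F"
      unfolding lift_def by (rule someI[of _ s]) (use s in simp)
    then have "lift (restrict s F) t = s t"
      using hom_on_agree_if_fixed[of L F t] L F(3) t fixed s(1) by (metis restrict_apply')
    moreover have "restrict s F \<in> embeddings F"
      unfolding embeddings_def using hom_on_subset[OF s(1) F(3)] by blast
    ultimately show "w \<in> (\<lambda>r. lift r t) ` embeddings F" using s(2) by force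
  qed
  then show ?thesis
    using finite_embeddings[OF F(1,2)] by (meson card_image_le card_mono finite_imageI le_trans)
qed

section \<open>Complex conjugation and the main theorem\<close>

lemma hom_on_commute_cnj:
  assumes F: "finite_galois_over_Q F" and S: "finite S" "\<forall>K\<in>S. abelian_galois_over_Q K"
    and s: "hom_on (gen_field (F \<union> \<Union> S)) s" and fix_F: "\<forall>f\<in>F. s f = f"
    and w: "w \<in> gen_field (F \<union> \<Union> S)"
  shows "s (cnj w) = cnj (s w)"
proof -
  define L where "L = gen_field (F \<union> \<Union> S)"
  have L: "finite_galois_over_Q L" unfolding L_def
    using finite_galois_gen_field_Union[OF F S(1)] S(2) by (simp add: abelian_galois_over_Q_def)
  have sL: "hom_on L s" using s by (simp add: L_def)
  define C where "C = {w \<in> L. (s \<circ> cnj) w = (cnj \<circ> s) w}"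
  have "subfield_C C" unfolding C_def
    by (rule subfield_C_equalizer[OF finite_galois_subfield[OF L] hom_on_comp[OF L sL hom_on_cnj]
          hom_on_comp[OF L hom_on_cnj sL]])
  moreover have "F \<subseteq> C"
    using fix_F hom_on_galois_closed[OF F hom_on_cnj] gen_field_superset[of "F \<union> \<Union> S"]
    by (auto simp: C_def L_def)
  moreover have "K \<subseteq> C" if K: "K \<in> S" for K
  proof
    fix k assume k: "k \<in> K"
    have KL: "K \<subseteq> L" using K gen_field_superset[of "F \<union> \<Union> S"] by (auto simp: L_def)
    have "abelian_galois_over_Q K" using S(2) K by blast
    moreover have "s \<in> field_auts K" "cnj \<in> field_auts K"
      using hom_on_galois_field_auts[OF _ hom_on_subset[OF sL KL]] cnj_field_auts calculation
      by (auto simp: abelian_galois_over_Q_def)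
    ultimately have "s (cnj k) = cnj (s k)" using k unfolding abelian_galois_over_Q_def by blast
    then show "k \<in> C" using k KL by (auto simp: C_def)
  qed
  ultimately have "L \<subseteq> C" unfolding L_def by (intro gen_field_least) auto
  then show ?thesis using w by (auto simp: C_def L_def)
qed

text \<open>A real number whose m-th power is rational is determined up to sign by that power,
  and the sign is invisible in the square.\<close>
lemma hom_on_fixes_square_of_real:
  assumes L: "subfield_C L" and s: "hom_on L s" and cnj_s: "\<And>w. w \<in> L \<Longrightarrow> s (cnj w) = cnj (s w)"
    and x: "x \<in> L" "x \<in> \<real>" and xm: "x ^ m \<in> \<rat>" and m: "m > 0"
  shows "s (x ^ 2) = x ^ 2"
proof -
  have "cnj (s x) = s x" using cnj_s[OF x(1)] Reals_cnj_iff x(2) by metis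
  then obtain r where r: "s x = of_real r" using Reals_cnj_iff by (metis Reals_cases)
  obtain r0 where r0: "x = of_real r0" using x(2) by (auto elim: Reals_cases)
  have "s x ^ m = x ^ m" using hom_on_power[OF s L x(1)] hom_on_Rats[OF s L xm] by simp
  then have "r ^ m = r0 ^ m" using r r0 by (metis of_real_eq_iff of_real_power)
  then have "\<bar>r\<bar> = \<bar>r0\<bar>" using m by (metis abs_ge_zero power_abs power_eq_imp_eq_base)
  then have "r ^ 2 = r0 ^ 2" by (metis power2_abs)
  then show ?thesis using hom_on_power[OF s L x(1)] r r0 by (metis of_real_power)
qed

lemma power_root_in_compositum_Qab_le:
  fixes a :: int
  assumes sq: "squarefree a" and a1: "a \<noteq> 1" and a2: "a \<noteq> -1" and F: "finite_galois_over_Q F"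
    and m: "m > 0" and x: "x \<in> compositum F Qab" and xm: "x ^ m = of_int a"
  shows "m \<le> 4 * card (embeddings F)"
proof -
  obtain S where S: "finite S" "\<forall>K\<in>S. abelian_galois_over_Q K" and xL: "x \<in> gen_field (F \<union> \<Union> S)"
    using compositum_Qab_subset[OF finite_galois_subfield[OF F]] x by blast
  define L where "L = gen_field (F \<union> \<Union> S)"
  have L: "finite_galois_over_Q L" unfolding L_def
    using finite_galois_gen_field_Union[OF F S(1)] S(2) by (simp add: abelian_galois_over_Q_def)
  have Lsf: "subfield_C L" by (rule finite_galois_subfield[OF L])
  have FL: "F \<subseteq> L" using gen_field_superset[of "F \<union> \<Union> S"] by (auto simp: L_def)
  define y where "y = x * cnj x"
  have y: "y \<in> L" "y \<in> \<real>"
    using xL hom_on_galois_closed[OF L hom_on_cnj] subfield_mult[OF Lsf]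
    by (auto simp: y_def L_def Reals_cnj_iff)
  have ym: "y ^ m = of_int (a ^ 2)"
    using xm by (simp add: y_def power_mult_distrib power2_eq_square flip: complex_cnj_power)
  define t where "t = y ^ 2"
  have "t ^ m = (y ^ m) ^ 2" unfolding t_def by (simp add: mult.commute flip: power_mult)
  then have tm: "t ^ m = of_int (a ^ 4)" using ym by (simp flip: power_mult)
  have t_fixed: "s t = t" if "hom_on L s" "\<forall>f\<in>F. s f = f" for s
    unfolding t_def using hom_on_fixes_square_of_real[OF Lsf that(1) _ y _ m] ym
      hom_on_commute_cnj[OF F S, of s] that by (simp add: L_def)
  have tL: "t \<in> L" using subfield_power[OF Lsf y(1)] by (simp add: t_def)
  have "m dvd 4 * card (conjugates L t)" by (rule dvd_card_conjugates[OF sq a1 a2 m L tL tm])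
  moreover have "card (conjugates L t) > 0"
    using finite_conjugates[OF Lsf finite_galois_finite[OF L] tL] self_in_conjugates card_gt_0_iff
      by blast
  ultimately have "m \<le> 4 * card (conjugates L t)" by (simp add: dvd_imp_le)
  also have "card (conjugates L t) \<le> card (embeddings F)"
    using card_conjugates_le_card_embeddings[of L F t] L finite_galois_subfield[OF F]
      finite_galois_finite[OF F] FL tL t_fixed by blast
  finally show ?thesis by simp
qed

theorem mainTheorem13:
  fixes a :: int and F :: "complex set"
  assumes "squarefree a" and "a \<noteq> 1" and "a \<noteq> -1"
    and "finite_galois_over_Q F"
  shows "\<exists>N :: nat. N > 0 \<and> (\<forall>m :: nat. m > 0 \<longrightarrow>
           (\<exists>x\<in>compositum F Qab. x ^ m = of_int a) \<longrightarrow> m dvd N)"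
proof (intro exI[of _ "fact (4 * card (embeddings F))"] conjI allI impI)
  show "fact (4 * card (embeddings F)) > (0 :: nat)" by simp
  fix m :: nat assume "m > 0" and "\<exists>x\<in>compositum F Qab. x ^ m = of_int a"
  then have "m \<le> 4 * card (embeddings F)"
    using power_root_in_compositum_Qab_le[OF assms] by blast
  with \<open>m > 0\<close> show "m dvd fact (4 * card (embeddings F))" by (intro dvd_fact) auto
qed

end
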